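(* Let $s \geq 0$ be real, let $u$ be a zero-mean trigonometric polynomial on $\mathbb{T}^d$ (or more generally a zero-mean function regular enough for all sums below to converge absolutely), and let $v = \overline{u}$. Define \[ Z_6(u) := \langle \Lambda^s (W_5)_1(u,v), \Lambda^s v\rangle + \langle \Lambda^s u, \Lambda^s (W_5)_2(u,v)\rangle . \] Then \[ Z_6(u) = \frac{3i}{32}\sum_{\substack{j,\ell,k\in\mathbb{Z}^d\setminus\{0\}\\ |k| = |j|+|\ell|}} \big(u_ju_{-j}u_\ell u_{-\ell}v_kv_{-k} - v_jv_{-j}v_\ell v_{-\ell}u_ku_{-k}\big)\,|j|\,|\ell|\,|k|\,\big(|k|^{2s} - |j|^{2s} - |\ell|^{2s}\big). \] In particular $Z_6(u) = 0$ for $s = \frac12$, while for $s=1$ the factor $|k|^{2s}-|j|^{2s}-|\ell|^{2s}$ equals $2|j||\ell|$ on the set of summation.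
   Context: $\mathbb{T}^d = (\mathbb{R}/2\pi\mathbb{Z})^d$. Zero-mean functions are written $u = \sum_{j\in\mathbb{Z}^d\setminus\{0\}} u_j e^{ij\cdot x}$; $|\cdot|$ is the Euclidean norm. $\Lambda^s$ is the Fourier multiplier $e^{ij\cdot x}\mapsto |j|^s e^{ij\cdot x}$. The pairing is the (normalized) bilinear form $\langle w,h\rangle := \sum_{j\neq0} w_j h_{-j}$. $\delta_a^b = 1$ if $a=b$ and $0$ otherwise; a quotient of the form $(1-\delta_a^b)/(a-b)$ is defined to be $0$ when $a=b$. All sums run over $j,\ell,k \in \mathbb{Z}^d\setminus\{0\}$ subject to the indicated constraints. For complex-conjugate pairs $(u,v)$, $v=\overline u$ (so $v_j = \overline{u_{-j}}$), \[ (W_5)_1(u,v) = \tfrac{i}{32}\!\!\sum_{|j|=|\ell|}\!\! u_ju_{-j}v_\ell v_{-\ell}u_k e^{ik\cdot x}|j|^2|\ell|^2\Big(\tfrac{1}{|j|+|k|} - \tfrac{1-\delta_{|\ell|}^{|k|}}{|\ell|-|k|}\Big) + \tfrac{3i}{32}\!\!\sum_{|k|=|j|+|\ell|}\!\! u_ju_{-j}u_\ell u_{-\ell}v_k e^{ik\cdot x}|j||\ell||k| \] \[ + \tfrac{i}{16}\!\!\sum_{|j|=|k|}\!\! u_ju_{-j}u_\ell v_{-\ell}v_k e^{ik\cdot x}|j|^2|\ell|\Big(6 + \tfrac{|\ell|}{|\ell|+|j|} + \tfrac{|\ell|(1-\delta_{|\ell|}^{|j|})}{|\ell|-|j|}\Big)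 + \tfrac{3i}{16}\!\!\sum_{|k|=|j|-|\ell|}\!\! u_ju_{-j}v_\ell v_{-\ell}v_k e^{ik\cdot x}|j||\ell||k|, \] and $(W_5)_2(u,v)$ is obtained from $(W_5)_1(u,v)$ by exchanging the roles of $u$ and $v$ everywhere and multiplying by $-1$ (equivalently, $(W_5)_2(u,\overline u) = \overline{(W_5)_1(u,\overline u)}$). *)

theory Defs
  imports "HOL-Analysis.Analysis"
begin

text \<open>Fourier side: a function on the torus T^d is represented by its coefficient map
  j \<mapsto> u_j on the lattice int^'d (the dimension d is the cardinality of the finite type 'd).\<close>

type_synonym 'd coeffs = "(int ^ ('d::finite)) \<Rightarrow> complex"

definition fnorm :: "int ^ 'd::finite \<Rightarrow> real" where
  "fnorm j = sqrt (\<Sum>i\<in>UNIV. (real_of_int (j $ i))^2)"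

definition kdelta :: "real \<Rightarrow> real \<Rightarrow> real" where
  "kdelta a b = (if a = b then 1 else 0)"

definition dquot :: "real \<Rightarrow> real \<Rightarrow> real" where
  "dquot a b = (if a = b then 0 else (1 - kdelta a b) / (a - b))"

definition trig_poly0 :: "'d::finite coeffs \<Rightarrow> bool" where
  "trig_poly0 u \<longleftrightarrow> finite {j. u j \<noteq> 0} \<and> u 0 = 0"

text \<open>coefficients of conj u: (conj u)_j = conj (u_{-j})\<close>
definition conjc :: "'d::finite coeffs \<Rightarrow> 'd coeffs" where
  "conjc u = (\<lambda>j. cnj (u (- j)))"

definition Lam :: "real \<Rightarrow> 'd::finite coeffs \<Rightarrow> 'd coeffs" where
  "Lam s w = (\<lambda>j. complex_of_real (fnorm j powr s) * w j)"

definition pairing :: "'d::finite coeffs \<Rightarrow> 'd coeffs \<Rightarrow> complex" where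
  "pairing w h = (\<Sum>\<^sub>\<infinity>j\<in>{j. j \<noteq> 0}. w j * h (- j))"

definition W51 :: "'d::finite coeffs \<Rightarrow> 'd coeffs \<Rightarrow> 'd coeffs" where
  "W51 u v = (\<lambda>k.
     \<i> / 32 * (\<Sum>\<^sub>\<infinity>(j,l)\<in>{(j,l). j \<noteq> 0 \<and> l \<noteq> 0 \<and> fnorm j = fnorm l}.
        u j * u (-j) * v l * v (-l) * u k *
        complex_of_real ((fnorm j)^2 * (fnorm l)^2 *
          (1 / (fnorm j + fnorm k) - dquot (fnorm l) (fnorm k))))
   + 3 * \<i> / 32 * (\<Sum>\<^sub>\<infinity>(j,l)\<in>{(j,l). j \<noteq> 0 \<and> l \<noteq> 0 \<and> fnorm k = fnorm j + fnorm l}.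
        u j * u (-j) * u l * u (-l) * v k *
        complex_of_real (fnorm j * fnorm l * fnorm k))
   + \<i> / 16 * (\<Sum>\<^sub>\<infinity>(j,l)\<in>{(j,l). j \<noteq> 0 \<and> l \<noteq> 0 \<and> fnorm j = fnorm k}.
        u j * u (-j) * u l * v (-l) * v k *
        complex_of_real ((fnorm j)^2 * fnorm l *
          (6 + fnorm l / (fnorm l + fnorm j) + fnorm l * dquot (fnorm l) (fnorm j))))
   + 3 * \<i> / 16 * (\<Sum>\<^sub>\<infinity>(j,l)\<in>{(j,l). j \<noteq> 0 \<and> l \<noteq> 0 \<and> fnorm k = fnorm j - fnorm l}.
        u j * u (-j) * v l * v (-l) * v k *
        complex_of_real (fnorm j * fnorm l * fnorm k)))"

definition W52 :: "'d::finite coeffs \<Rightarrow> 'd coeffs \<Rightarrow> 'd coeffs" where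
  "W52 u v = (\<lambda>k. - W51 v u k)"

definition Z6 :: "real \<Rightarrow> 'd::finite coeffs \<Rightarrow> complex" where
  "Z6 s u = (let v = conjc u in
     pairing (Lam s (W51 u v)) (Lam s v) + pairing (Lam s u) (Lam s (W52 u v)))"

definition Z6_rhs :: "real \<Rightarrow> 'd::finite coeffs \<Rightarrow> complex" where
  "Z6_rhs s u = (let v = conjc u in
     3 * \<i> / 32 * (\<Sum>\<^sub>\<infinity>(j,l,k)\<in>{(j,l,k). j \<noteq> 0 \<and> l \<noteq> 0 \<and> k \<noteq> 0 \<and> fnorm k = fnorm j + fnorm l}.
       (u j * u (-j) * u l * u (-l) * v k * v (-k) - v j * v (-j) * v l * v (-l) * u k * u (-k)) *
       complex_of_real (fnorm j * fnorm l * fnorm k *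
         (fnorm k powr (2 * s) - fnorm j powr (2 * s) - fnorm l powr (2 * s)))))"

end

theory Submission
  imports Defs
begin

(* As u is a trigonometric polynomial, every sum involved is a finite sum over a finite set F
   of nonzero frequencies with -F = F, and
     Z6(u) = sum_k |k|^(2s) ((W5)_1(u,v)_k v_(-k) - u_k (W5)_1(v,u)_(-k)).
   Of the four sums making up (W5)_1, the first and the third drop out: their contributions to
   the two halves of Z6 are carried into each other by relabelling the summation indices
   (j <-> l for the first; j <-> k together with l -> -l for the third). The second and the
   fourth both become sums of one kernel G(j,l,k), supported on |k| = |j| + |l|, weighted by
   |k|^(2s) and (after renaming j <-> k) by -|j|^(2s) respectively. Since G is symmetric in j
   and l, twice the latter sum is the sum weighted by -|j|^(2s) - |l|^(2s). *)

lemma fnorm_uminus [simp]: "fnorm (- j) = fnorm j"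
  by (simp add: fnorm_def)

lemma fnorm_nonneg [simp]: "fnorm j \<ge> 0"
  by (simp add: fnorm_def sum_nonneg)

lemma infsum_eq_sum_superset:
  fixes f :: "'a \<Rightarrow> 'b::{comm_monoid_add, t2_space}"
  assumes "finite F" and "\<And>x. x \<in> A \<Longrightarrow> x \<notin> F \<Longrightarrow> f x = 0"
  shows "infsum f A = (\<Sum>x\<in>F. if x \<in> A then f x else 0)"
proof -
  have "infsum f A = infsum f (F \<inter> A)"
    by (rule infsum_cong_neutral) (use assms(2) in auto)
  also have "\<dots> = (\<Sum>x\<in>F. if x \<in> A then f x else 0)"
    using assms(1) by (simp add: sum.inter_restrict)
  finally show ?thesis .
qed

lemma infsum_nonzero_pairs_eq_sum:
  fixes f :: "'a::zero \<Rightarrow> 'a \<Rightarrow> 'b::{comm_monoid_add, t2_space}"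
  assumes "finite F" and "0 \<notin> F" and "\<And>j l. j \<notin> F \<or> l \<notin> F \<Longrightarrow> f j l = 0"
  shows "(\<Sum>\<^sub>\<infinity>(j,l)\<in>{(j,l). j \<noteq> 0 \<and> l \<noteq> 0 \<and> P j l}. f j l)
       = (\<Sum>j\<in>F. \<Sum>l\<in>F. if P j l then f j l else 0)"
  using assms
  by (subst infsum_eq_sum_superset[of "F \<times> F"])
     (auto simp: sum.cartesian_product intro!: sum.cong)

lemma infsum_nonzero_triples_eq_sum:
  fixes f :: "'a::zero \<Rightarrow> 'a \<Rightarrow> 'a \<Rightarrow> 'b::{comm_monoid_add, t2_space}"
  assumes "finite F" and "0 \<notin> F" and "\<And>j l k. j \<notin> F \<or> l \<notin> F \<or> k \<notin> F \<Longrightarrow> f j l k = 0"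
  shows "(\<Sum>\<^sub>\<infinity>(j,l,k)\<in>{(j,l,k). j \<noteq> 0 \<and> l \<noteq> 0 \<and> k \<noteq> 0 \<and> P j l k}. f j l k)
       = (\<Sum>j\<in>F. \<Sum>l\<in>F. \<Sum>k\<in>F. if P j l k then f j l k else 0)"
  using assms
  by (subst infsum_eq_sum_superset[of "F \<times> F \<times> F"])
     (auto simp: sum.cartesian_product intro!: sum.cong)

lemma sum_reflect:
  fixes f :: "'a::group_add \<Rightarrow> 'b::comm_monoid_add"
  assumes "uminus ` F \<subseteq> F"
  shows "(\<Sum>j\<in>F. f (- j)) = (\<Sum>j\<in>F. f j)"
  by (rule sum.reindex_bij_witness[of _ uminus uminus]) (use assms in auto)

lemma sum_swap_inner:
  "(\<Sum>i\<in>A. \<Sum>j\<in>B. \<Sum>k\<in>C. f i j k) = (\<Sum>i\<in>A. \<Sum>k\<in>C. \<Sum>j\<in>B. f i j k)"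
  by (rule sum.cong[OF refl], rule sum.swap)

definition W51_part1 ::
    "(int ^ 'd::finite) set \<Rightarrow> 'd coeffs \<Rightarrow> 'd coeffs \<Rightarrow> int ^ 'd \<Rightarrow> complex" where
  "W51_part1 F a b k = (\<Sum>j\<in>F. \<Sum>l\<in>F. if fnorm j = fnorm l then
     a j * a (-j) * b l * b (-l) * a k *
     complex_of_real ((fnorm j)^2 * (fnorm l)^2 * (1 / (fnorm j + fnorm k) - dquot (fnorm l) (fnorm k)))
   else 0)"

definition W51_part2 ::
    "(int ^ 'd::finite) set \<Rightarrow> 'd coeffs \<Rightarrow> 'd coeffs \<Rightarrow> int ^ 'd \<Rightarrow> complex" where
  "W51_part2 F a b k = (\<Sum>j\<in>F. \<Sum>l\<in>F. if fnorm k = fnorm j + fnorm l then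
     a j * a (-j) * a l * a (-l) * b k * complex_of_real (fnorm j * fnorm l * fnorm k)
   else 0)"

definition W51_part3 ::
    "(int ^ 'd::finite) set \<Rightarrow> 'd coeffs \<Rightarrow> 'd coeffs \<Rightarrow> int ^ 'd \<Rightarrow> complex" where
  "W51_part3 F a b k = (\<Sum>j\<in>F. \<Sum>l\<in>F. if fnorm j = fnorm k then
     a j * a (-j) * a l * b (-l) * b k *
     complex_of_real ((fnorm j)^2 * fnorm l *
       (6 + fnorm l / (fnorm l + fnorm j) + fnorm l * dquot (fnorm l) (fnorm j)))
   else 0)"

definition W51_part4 ::
    "(int ^ 'd::finite) set \<Rightarrow> 'd coeffs \<Rightarrow> 'd coeffs \<Rightarrow> int ^ 'd \<Rightarrow> complex" where
  "W51_part4 F a b k = (\<Sum>j\<in>F. \<Sum>l\<in>F. if fnorm k = fnorm j - fnorm l then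
     a j * a (-j) * b l * b (-l) * b k * complex_of_real (fnorm j * fnorm l * fnorm k)
   else 0)"

definition Z6_form :: "real \<Rightarrow> (int ^ 'd::finite) set \<Rightarrow> ('d coeffs \<Rightarrow> 'd coeffs \<Rightarrow> 'd coeffs)
    \<Rightarrow> 'd coeffs \<Rightarrow> 'd coeffs \<Rightarrow> complex" where
  "Z6_form s F T a b =
     (\<Sum>k\<in>F. complex_of_real (fnorm k powr (2 * s)) * (T a b k * b (- k) - a k * T b a (- k)))"

definition Z6_kernel ::
    "'d::finite coeffs \<Rightarrow> 'd coeffs \<Rightarrow> int ^ 'd \<Rightarrow> int ^ 'd \<Rightarrow> int ^ 'd \<Rightarrow> complex" where
  "Z6_kernel a b j l k = (if fnorm k = fnorm j + fnorm l then
     (a j * a (-j) * a l * a (-l) * b k * b (-k) - b j * b (-j) * b l * b (-l) * a k * a (-k)) *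
     complex_of_real (fnorm j * fnorm l * fnorm k)
   else 0)"

lemma Z6_kernel_swap: "Z6_kernel a b l j k = Z6_kernel a b j l k"
  unfolding Z6_kernel_def by (simp add: ac_simps)

lemma sum_Z6_kernel_weight_swap:
  "(\<Sum>j\<in>F. \<Sum>l\<in>F. \<Sum>k\<in>F. w j * Z6_kernel a b j l k)
 = (\<Sum>j\<in>F. \<Sum>l\<in>F. \<Sum>k\<in>F. w l * Z6_kernel a b j l k)"
  by (subst sum.swap) (simp add: Z6_kernel_swap)

lemma W51_part1_exchange: "W51_part1 F a b k * b (- k) = a k * W51_part1 F b a (- k)"
proof -
  have "a k * W51_part1 F b a (- k) = (\<Sum>l\<in>F. \<Sum>j\<in>F. if fnorm l = fnorm j then
     b l * b (-l) * a j * a (-j) * b (-k) * a k *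
     complex_of_real ((fnorm l)^2 * (fnorm j)^2 * (1 / (fnorm l + fnorm k) - dquot (fnorm j) (fnorm k)))
     else 0)"
    unfolding W51_part1_def sum_distrib_left by (auto simp: ac_simps intro!: sum.cong)
  also have "\<dots> = W51_part1 F a b k * b (- k)"
    unfolding W51_part1_def sum_distrib_right
    by (subst sum.swap) (auto simp: ac_simps intro!: sum.cong)
  finally show ?thesis ..
qed

lemma W51_part2_exchange:
  "W51_part2 F a b k * b (- k) - a k * W51_part2 F b a (- k) = (\<Sum>j\<in>F. \<Sum>l\<in>F. Z6_kernel a b j l k)"
  unfolding W51_part2_def Z6_kernel_def sum_distrib_left sum_distrib_right sum_subtractf[symmetric]
  by (intro sum.cong refl) (simp add: algebra_simps)

lemma W51_part4_exchange:
  "W51_part4 F a b k * b (- k) - a k * W51_part4 F b a (- k) = - (\<Sum>j\<in>F. \<Sum>l\<in>F. Z6_kernel a b k l j)"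
  unfolding W51_part4_def Z6_kernel_def sum_distrib_left sum_distrib_right sum_subtractf[symmetric]
    sum_negf[symmetric]
  by (intro sum.cong refl) (simp add: algebra_simps)

lemma Z6_form_W51_part1: "Z6_form s F (W51_part1 F) a b = 0"
  unfolding Z6_form_def by (simp add: W51_part1_exchange)

lemma Z6_form_W51_part2:
  "Z6_form s F (W51_part2 F) a b =
     (\<Sum>j\<in>F. \<Sum>l\<in>F. \<Sum>k\<in>F. complex_of_real (fnorm k powr (2 * s)) * Z6_kernel a b j l k)"
  unfolding Z6_form_def W51_part2_exchange sum_distrib_left
  by (subst sum.swap) (rule sum_swap_inner)

lemma Z6_form_W51_part4:
  "Z6_form s F (W51_part4 F) a b =
     - (\<Sum>j\<in>F. \<Sum>l\<in>F. \<Sum>k\<in>F. complex_of_real (fnorm j powr (2 * s)) * Z6_kernel a b j l k)"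
  unfolding Z6_form_def W51_part4_exchange sum_distrib_left mult_minus_right sum_negf
  by (subst sum_swap_inner) (rule refl)

lemma support_conjc_subset:
  assumes "uminus ` F \<subseteq> F" and "{j. u j \<noteq> 0} \<subseteq> F"
  shows "{j. conjc u j \<noteq> 0} \<subseteq> F"
  using assms by (force simp: conjc_def)

lemma Z6_form_W51_part3:
  fixes a b :: "'d::finite coeffs"
  assumes uminus_F: "uminus ` F \<subseteq> F"
  shows "Z6_form s F (W51_part3 F) a b = 0"
proof -
  define p :: "real \<Rightarrow> complex" where "p r = complex_of_real (r powr (2 * s))" for r
  define c where "c r t = complex_of_real (r^2 * t * (6 + t / (t + r) + t * dquot t r))" for r t
  have reflect: "(\<Sum>l\<in>F. g (- l)) = (\<Sum>l\<in>F. g l)" for g :: "int ^ 'd \<Rightarrow> complex"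
    by (rule sum_reflect[OF uminus_F])
  have "(\<Sum>k\<in>F. p (fnorm k) * (a k * W51_part3 F b a (- k)))
      = (\<Sum>k\<in>F. \<Sum>j\<in>F. \<Sum>l\<in>F. if fnorm j = fnorm k then
           p (fnorm k) * (a k * a (- k) * b j * b (- j) * b l * a (- l) * c (fnorm j) (fnorm l)) else 0)"
    unfolding W51_part3_def c_def sum_distrib_left by (auto simp: ac_simps intro!: sum.cong)
  also have "\<dots> = (\<Sum>k\<in>F. \<Sum>j\<in>F. \<Sum>l\<in>F. if fnorm k = fnorm j then
           p (fnorm j) * (a j * a (- j) * b k * b (- k) * b l * a (- l) * c (fnorm k) (fnorm l)) else 0)"
    by (rule sum.swap)
  also have "\<dots> = (\<Sum>k\<in>F. \<Sum>j\<in>F. \<Sum>l\<in>F. if fnorm k = fnorm j then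
           p (fnorm j) * (a j * a (- j) * b k * b (- k) * b (- l) * a l * c (fnorm k) (fnorm l)) else 0)"
    by (rule sum.cong[OF refl], rule sum.cong[OF refl], subst reflect[symmetric])
       (simp only: minus_minus fnorm_uminus)
  also have "\<dots> = (\<Sum>k\<in>F. p (fnorm k) * (W51_part3 F a b k * b (- k)))"
    unfolding W51_part3_def c_def sum_distrib_left sum_distrib_right
    by (auto simp: ac_simps intro!: sum.cong)
  finally show ?thesis
    unfolding Z6_form_def p_def by (simp add: right_diff_distrib sum_subtractf)
qed

context
  fixes F :: "(int ^ 'd::finite) set"
  assumes finite_F: "finite F" and zero_notin_F: "0 \<notin> F"
begin

lemma W51_eq_parts:
  assumes "{j. a j \<noteq> 0} \<subseteq> F" and "{j. b j \<noteq> 0} \<subseteq> F"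
  shows "W51 a b k = \<i> / 32 * W51_part1 F a b k + 3 * \<i> / 32 * W51_part2 F a b k
                   + \<i> / 16 * W51_part3 F a b k + 3 * \<i> / 16 * W51_part4 F a b k"
  unfolding W51_def W51_part1_def W51_part2_def W51_part3_def W51_part4_def
  by (subst infsum_nonzero_pairs_eq_sum[OF finite_F zero_notin_F], use assms in force)+ (rule refl)

lemma Z6_form_W51:
  assumes "{j. a j \<noteq> 0} \<subseteq> F" and "{j. b j \<noteq> 0} \<subseteq> F"
  shows "Z6_form s F W51 a b =
           \<i> / 32 * Z6_form s F (W51_part1 F) a b + 3 * \<i> / 32 * Z6_form s F (W51_part2 F) a b
         + \<i> / 16 * Z6_form s F (W51_part3 F) a b + 3 * \<i> / 16 * Z6_form s F (W51_part4 F) a b"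
  unfolding Z6_form_def sum_distrib_left sum.distrib[symmetric]
  by (intro sum.cong refl) (simp add: W51_eq_parts[OF assms] W51_eq_parts[OF assms(2,1)] algebra_simps)

lemma pairing_Lam_eq_sum:
  assumes "\<And>k. k \<notin> F \<Longrightarrow> a k * b (- k) = 0"
  shows "pairing (Lam s a) (Lam s b) = (\<Sum>k\<in>F. complex_of_real (fnorm k powr (2 * s)) * (a k * b (- k)))"
proof -
  have "pairing (Lam s a) (Lam s b) = (\<Sum>k\<in>F. Lam s a k * Lam s b (- k))"
    unfolding pairing_def using finite_F zero_notin_F assms
    by (subst infsum_eq_sum_superset[of F]) (auto simp: Lam_def intro!: sum.cong)
  also have "\<dots> = (\<Sum>k\<in>F. complex_of_real (fnorm k powr (2 * s)) * (a k * b (- k)))"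
  proof (intro sum.cong refl)
    fix k :: "int ^ 'd"
    have "fnorm k powr (2 * s) = fnorm k powr s * fnorm k powr s"
      by (metis mult_2 powr_add)
    then show "Lam s a k * Lam s b (- k) = complex_of_real (fnorm k powr (2 * s)) * (a k * b (- k))"
      unfolding Lam_def by (simp only: of_real_mult fnorm_uminus ac_simps)
  qed
  finally show ?thesis .
qed

lemma Z6_eq_Z6_form:
  assumes "{j. u j \<noteq> 0} \<subseteq> F"
  shows "Z6 s u = Z6_form s F W51 u (conjc u)"
proof -
  have "pairing (Lam s (W51 u (conjc u))) (Lam s (conjc u)) =
      (\<Sum>k\<in>F. complex_of_real (fnorm k powr (2 * s)) * (W51 u (conjc u) k * conjc u (- k)))"
    by (intro pairing_Lam_eq_sum) (use assms in \<open>auto simp: conjc_def\<close>)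
  moreover have "pairing (Lam s u) (Lam s (W52 u (conjc u))) =
      (\<Sum>k\<in>F. complex_of_real (fnorm k powr (2 * s)) * (u k * W52 u (conjc u) (- k)))"
    by (intro pairing_Lam_eq_sum) (use assms in auto)
  ultimately show ?thesis
    unfolding Z6_def Z6_form_def W52_def Let_def
    by (simp add: sum.distrib[symmetric] algebra_simps)
qed

lemma Z6_rhs_eq_sum:
  assumes uminus_F: "uminus ` F \<subseteq> F" and u: "{j. u j \<noteq> 0} \<subseteq> F"
  shows "Z6_rhs s u = 3 * \<i> / 32 * (\<Sum>j\<in>F. \<Sum>l\<in>F. \<Sum>k\<in>F.
     (complex_of_real (fnorm k powr (2 * s)) - complex_of_real (fnorm j powr (2 * s))
        - complex_of_real (fnorm l powr (2 * s))) * Z6_kernel u (conjc u) j l k)"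
proof -
  have v_zero: "conjc u j = 0" if "j \<notin> F" for j
    using that support_conjc_subset[OF uminus_F u] by blast
  have u_zero: "u j = 0" if "j \<notin> F" for j
    using that u by blast
  show ?thesis
    unfolding Z6_rhs_def Let_def
    by (subst infsum_nonzero_triples_eq_sum[OF finite_F zero_notin_F])
       (auto simp: u_zero v_zero Z6_kernel_def algebra_simps intro!: sum.cong)
qed

lemma Z6_eq_Z6_rhs:
  assumes uminus_F: "uminus ` F \<subseteq> F" and u: "{j. u j \<noteq> 0} \<subseteq> F"
  shows "Z6 s u = Z6_rhs s u"
proof -
  define p where "p k = complex_of_real (fnorm k powr (2 * s))" for k :: "int ^ 'd"
  define K where "K = Z6_kernel u (conjc u)"
  have "Z6 s u = Z6_form s F W51 u (conjc u)"
    by (rule Z6_eq_Z6_form[OF u])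
  also have "\<dots> = 3 * \<i> / 32 * (\<Sum>j\<in>F. \<Sum>l\<in>F. \<Sum>k\<in>F. p k * K j l k)
                 - 3 * \<i> / 16 * (\<Sum>j\<in>F. \<Sum>l\<in>F. \<Sum>k\<in>F. p j * K j l k)"
    unfolding Z6_form_W51[OF u support_conjc_subset[OF uminus_F u]] Z6_form_W51_part1
      Z6_form_W51_part2 Z6_form_W51_part3[OF uminus_F] Z6_form_W51_part4 p_def K_def
    by simp
  also have "\<dots> = 3 * \<i> / 32 * ((\<Sum>j\<in>F. \<Sum>l\<in>F. \<Sum>k\<in>F. p k * K j l k)
                 - (\<Sum>j\<in>F. \<Sum>l\<in>F. \<Sum>k\<in>F. p j * K j l k) - (\<Sum>j\<in>F. \<Sum>l\<in>F. \<Sum>k\<in>F. p l * K j l k))"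
    using sum_Z6_kernel_weight_swap[where w = p and a = u and b = "conjc u"]
    by (simp add: K_def algebra_simps)
  also have "\<dots> = 3 * \<i> / 32 * (\<Sum>j\<in>F. \<Sum>l\<in>F. \<Sum>k\<in>F. (p k - p j - p l) * K j l k)"
    by (simp add: left_diff_distrib sum_subtractf)
  also have "\<dots> = Z6_rhs s u"
    unfolding Z6_rhs_eq_sum[OF uminus_F u] p_def K_def ..
  finally show ?thesis .
qed

end

theorem mainTheorem6:
  fixes u :: "(int ^ 'd::finite) \<Rightarrow> complex" and s :: real
  assumes "s \<ge> 0" and "trig_poly0 u"
  shows "Z6 s u = Z6_rhs s u
         \<and> Z6 (1/2) u = 0
         \<and> (\<forall>(j::int ^ 'd) (l::int ^ 'd) (k::int ^ 'd). fnorm k = fnorm j + fnorm l \<longrightarrow>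
              fnorm k powr 2 - fnorm j powr 2 - fnorm l powr 2 = 2 * fnorm j * fnorm l)"
proof -
  define F where "F = {j. u j \<noteq> 0} \<union> uminus ` {j. u j \<noteq> 0}"
  have "finite F" "0 \<notin> F" "uminus ` F \<subseteq> F"
    using assms(2) by (auto simp: trig_poly0_def F_def)
  then have Z6_eq: "Z6 s' u = Z6_rhs s' u" for s'
    by (rule Z6_eq_Z6_rhs) (auto simp: F_def)
  have "Z6_rhs (1/2) u = 0"
    unfolding Z6_rhs_def Let_def by (subst infsum_0) auto
  moreover have "fnorm k powr 2 - fnorm j powr 2 - fnorm l powr 2 = 2 * fnorm j * fnorm l"
    if "fnorm k = fnorm j + fnorm l" for j l k :: "int ^ 'd"
    using that by (simp add: power2_eq_square algebra_simps)
  ultimately show ?thesis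
    using Z6_eq by auto
qed

end
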